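(* There is a constant $C>0$ such that for all sufficiently large $n$ and every $Q \in \mathcal{Q}_n$, $$\sup_{w \in G_a} |Q(w)| \ge \exp(-Cn^{1/5}\log^5 n).$$
   Context: Let $n$ be a positive integer, $a = n^{-2/5}$, $\alpha = e^{ia}$, $\beta = e^{-ia}$, and $G_a = \{z \in \mathbb{C} : \arg(\frac{\alpha-z}{z-\beta}) \in (\frac{a}{2},a)\}$ (principal argument), the open region bounded by the circular arcs $\{z:\arg(\frac{\alpha-z}{z-\beta})=a/2\}$ and $\{z:\arg(\frac{\alpha-z}{z-\beta})=a\}$. $\mathcal{P}_n$ is the set of polynomials $p(z) = 1-\sigma z^d+\sum_{j = n^{1/5}}^n c_j z^j \in \mathbb{C}[z]$ with $1 \le d < n^{1/5}$ an integer, $\sigma \in \{0,1\}$, $|c_j| \le 1$ (floor functions omitted); $\mathcal{Q}_n$ is the set of polynomials $(z-\alpha)(z-\beta)p(z)$ with $p \in \mathcal{P}_n$. $\log$ is the natural logarithm. *)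

theory Defs
  imports "HOL-Analysis.Analysis"
begin

definition Ga :: "real \<Rightarrow> complex set" where
  "Ga a = {z. Arg ((cis a - z) / (z - cis (- a))) \<in> {a / 2 <..< a}}"

definition in_P :: "nat \<Rightarrow> (complex \<Rightarrow> complex) \<Rightarrow> bool" where
  "in_P n p \<longleftrightarrow> (\<exists>\<sigma>::complex. \<exists>d::nat. \<exists>c::nat \<Rightarrow> complex.
      \<sigma> \<in> {0, 1} \<and> 1 \<le> d \<and> real d < real n powr (1/5) \<and>
      (\<forall>j. real n powr (1/5) \<le> real j \<and> j \<le> n \<longrightarrow> norm (c j) \<le> 1) \<and>
      p = (\<lambda>z. 1 - \<sigma> * z ^ d + (\<Sum>j\<in>{j. real n powr (1/5) \<le> real j \<and> j \<le> n}. c j * z ^ j)))"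

definition in_Q :: "nat \<Rightarrow> (complex \<Rightarrow> complex) \<Rightarrow> bool" where
  "in_Q n Q \<longleftrightarrow> (\<exists>p. in_P n p \<and>
      Q = (\<lambda>z. (z - cis (real n powr (-2/5))) * (z - cis (- (real n powr (-2/5)))) * p z))"

end

(*
  Write alpha = cis a and beta = cis (-a). The map W |-> (alpha + beta W) / (1 + W) inverts
  z |-> (alpha - z) / (z - beta); composed with exp it sends the line Im zeta = a - pi onto the
  unit circle, the line Im zeta = 3a/4 into G_a, and the two ends Re zeta -> -oo, +oo of the
  strip between them to the zeros alpha and beta of Q. The maximum modulus principle for
  Q (z zeta) * exp (-i kappa zeta) on long rectangles of this strip is a two-constants estimate:
  |Q (z (i y))| e^(kappa y) is at most the larger of M e^(kappa (a - pi)), with M a bound for Q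
  on the unit disc, and sup_(G_a) |Q| e^(3 kappa a / 4).

  The point z (i (eta + a - pi)) is the real number rho = sin ((eta - a)/2) / sin ((eta + a)/2).
  For eta = 1 / (64 n^(1/5) log n) one gets 1 - rho >= 4 log n / n^(1/5), so the tail
  sum_(j >= n^(1/5)) c_j rho^j of p is O(n^-3) while |1 - sigma rho^d| >= 4/n, and |Q rho| >= 1/(4 n^3).
  With kappa = 640 n^(1/5) log^2 n the factor e^(kappa eta) = n^10 beats M = 4 (n + 3), so the
  second alternative holds and sup_(G_a) |Q| >= |Q rho| e^(-4 kappa) >= exp (-O(n^(1/5) log^2 n)).
*)

theory Submission
  imports Defs "HOL-Complex_Analysis.Complex_Analysis" "HOL-Real_Asymp.Real_Asymp"
begin

lemma cos_ge_one_half: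
  fixes x :: real assumes "0 \<le> x" "x \<le> 1" shows "1/2 \<le> cos x"
proof -
  have "cos (pi/3) \<le> cos x"
    using assms pi_gt3 by (intro cos_monotone_0_pi_le) auto
  thus ?thesis by (simp add: cos_60)
qed

lemma sin_ge_half_self:
  fixes x :: real assumes "0 \<le> x" "x \<le> 1" shows "x/2 \<le> sin x"
proof (cases "x = 0")
  case False
  then obtain z where z: "0 < z" "z < x" "sin x - sin 0 = (x - 0) * cos z"
    using MVT2[of 0 x sin cos] assms by (auto intro: DERIV_sin)
  have "x * (1/2) \<le> x * cos z"
    using z assms cos_ge_one_half[of z] by (intro mult_left_mono) auto
  thus ?thesis using z by simp
qed simp

definition lens_param :: "complex \<Rightarrow> complex \<Rightarrow> complex \<Rightarrow> complex" where
  "lens_param \<alpha> \<beta> W = (\<alpha> + \<beta> * W) / (1 + W)"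

lemma lens_param_ratio:
  assumes "1 + W \<noteq> 0" "\<alpha> \<noteq> \<beta>"
  shows "(\<alpha> - lens_param \<alpha> \<beta> W) / (lens_param \<alpha> \<beta> W - \<beta>) = W"
proof -
  have "\<alpha> - lens_param \<alpha> \<beta> W = W * (\<alpha> - \<beta>) / (1 + W)"
       "lens_param \<alpha> \<beta> W - \<beta> = (\<alpha> - \<beta>) / (1 + W)"
    using assms(1) by (simp_all add: lens_param_def field_simps)
  thus ?thesis using assms by simp
qed

lemma lens_param_inverse:
  assumes "\<alpha> \<noteq> \<beta>" "z \<noteq> \<beta>"
  shows "lens_param \<alpha> \<beta> ((\<alpha> - z) / (z - \<beta>)) = z"
proof -
  have "1 + (\<alpha> - z) / (z - \<beta>) = (\<alpha> - \<beta>) / (z - \<beta>)"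
       "\<alpha> + \<beta> * ((\<alpha> - z) / (z - \<beta>)) = z * (\<alpha> - \<beta>) / (z - \<beta>)"
    using assms by (simp_all add: field_simps)
  thus ?thesis using assms by (simp add: lens_param_def)
qed

lemma lens_param_swap:
  assumes "W \<noteq> 0"
  shows "lens_param \<alpha> \<beta> W = lens_param \<beta> \<alpha> (inverse W)"
proof -
  have "lens_param \<beta> \<alpha> (inverse W) = (W * (\<beta> + \<alpha> * inverse W)) / (W * (1 + inverse W))"
    using assms by (simp add: lens_param_def)
  also have "\<dots> = lens_param \<alpha> \<beta> W"
    using assms by (simp add: lens_param_def distrib_left mult.left_commute[of W] add.commute)
  finally show ?thesis ..
qed

lemma lens_param_near_left:
  assumes "norm \<alpha> = 1" "norm \<beta> = 1" "norm W \<le> \<epsilon>" "\<epsilon> \<le> 1/2"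
  shows "norm (lens_param \<alpha> \<beta> W - \<alpha>) \<le> 4 * \<epsilon>" "norm (lens_param \<alpha> \<beta> W) \<le> 3"
proof -
  have half: "1/2 \<le> norm (1 + W)"
    using norm_diff_ineq[of 1 W] assms(3,4) by simp
  have "\<alpha> + \<beta> * W - \<alpha> * (1 + W) = W * (\<beta> - \<alpha>)"
    by (simp add: algebra_simps)
  moreover have "1 + W \<noteq> 0" using half by auto
  ultimately have "lens_param \<alpha> \<beta> W - \<alpha> = W * (\<beta> - \<alpha>) / (1 + W)"
    by (simp add: lens_param_def divide_diff_eq_iff)
  hence "norm (lens_param \<alpha> \<beta> W - \<alpha>) = norm W * norm (\<beta> - \<alpha>) / norm (1 + W)"
    by (simp add: norm_mult norm_divide)
  also have "\<dots> \<le> \<epsilon> * 2 / (1/2)"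
    using half assms norm_triangle_ineq4[of \<beta> \<alpha>] order_trans[OF norm_ge_zero assms(3)]
    by (intro frac_le mult_mono) auto
  finally show close: "norm (lens_param \<alpha> \<beta> W - \<alpha>) \<le> 4 * \<epsilon>" by simp
  show "norm (lens_param \<alpha> \<beta> W) \<le> 3"
    using norm_triangle_sub[of "lens_param \<alpha> \<beta> W" \<alpha>] close assms by simp
qed

lemma lens_param_near_vertex:
  assumes "norm \<alpha> = 1" "norm \<beta> = 1" "0 < \<epsilon>" "\<epsilon> \<le> 1/2"
    and "norm W \<le> \<epsilon> \<or> 1/\<epsilon> \<le> norm W"
  shows "\<exists>\<gamma>\<in>{\<alpha>, \<beta>}. norm (lens_param \<alpha> \<beta> W - \<gamma>) \<le> 4 * \<epsilon> \<and> norm (lens_param \<alpha> \<beta> W) \<le> 3"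
  using assms(5)
proof
  assume "norm W \<le> \<epsilon>"
  thus ?thesis using assms lens_param_near_left by blast
next
  assume W: "1/\<epsilon> \<le> norm W"
  hence "W \<noteq> 0" using assms(3) by auto
  have "norm (inverse W) \<le> inverse (1/\<epsilon>)"
    unfolding norm_inverse using W assms(3) by (intro le_imp_inverse_le) auto
  hence "norm (inverse W) \<le> \<epsilon>" by simp
  thus ?thesis
    using assms lens_param_near_left[of \<beta> \<alpha> "inverse W" \<epsilon>] lens_param_swap[OF \<open>W \<noteq> 0\<close>] by auto
qed

lemma norm_lens_param_on_circle:
  fixes a r :: real
  assumes "1 - of_real r * cis a \<noteq> 0"
  shows "norm (lens_param (cis a) (cis (-a)) (- (of_real r * cis a))) = 1"
proof -
  have "(norm (cis a - of_real r))^2 = (norm (1 - of_real r * cis a))^2"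
    unfolding cmod_power2 by (simp add: power2_eq_square algebra_simps)
      (metis sin_cos_squared_add3 distrib_left mult.assoc mult.right_neutral)
  hence "norm (cis a - of_real r) = norm (1 - of_real r * cis a)"
    by (simp add: power2_eq_iff_nonneg)
  moreover have "lens_param (cis a) (cis (-a)) (- (of_real r * cis a))
      = (cis a - of_real r) / (1 - of_real r * cis a)"
    by (simp add: lens_param_def mult.left_commute[of "cis (-a)"] cis_mult)
  ultimately show ?thesis using assms by (simp add: norm_divide)
qed

lemma norm_lens_param_le_two:
  assumes "norm \<alpha> \<le> 1" "norm \<beta> \<le> 1" "0 \<le> Re W"
  shows "norm (lens_param \<alpha> \<beta> W) \<le> 2"
proof -
  have "(norm (1 + W))^2 = 1 + 2 * Re W + (norm W)^2"
    unfolding cmod_power2 by (simp add: power2_eq_square algebra_simps)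
  hence "(norm W)^2 \<le> (norm (1 + W))^2" "1 \<le> (norm (1 + W))^2"
    using assms(3) by simp_all
  hence "norm W \<le> norm (1 + W)" "1 \<le> norm (1 + W)"
    by (auto intro: power2_le_imp_le simp: power2_le_iff_abs_le)
  moreover have "norm (\<alpha> + \<beta> * W) \<le> 1 + norm W"
    using norm_triangle_ineq[of \<alpha> "\<beta> * W"] assms mult_left_le_one_le[of "norm W" "norm \<beta>"]
    by (simp add: norm_mult mult.commute)
  ultimately show ?thesis
    by (simp add: lens_param_def norm_divide divide_le_eq)
qed

lemma lens_param_real_point:
  assumes "sin ((\<eta> + a)/2) \<noteq> 0"
  shows "lens_param (cis a) (cis (-a)) (cis (\<eta> + a - pi))
           = of_real (sin ((\<eta> - a)/2) / sin ((\<eta> + a)/2))"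
proof -
  have cis_diff: "cis x - cis y = - 2 * \<i> * of_real (sin ((y - x)/2)) * cis ((x + y)/2)" for x y
  proof -
    have "sin ((y - x)/2) = - sin ((x - y)/2)" by (metis minus_diff_eq minus_divide_left sin_minus)
    thus ?thesis by (simp add: complex_eq_iff cos_diff_cos sin_diff_sin algebra_simps)
  qed
  have "cis (\<eta> + a - pi) = - cis (\<eta> + a)" by (simp add: cis_divide[symmetric])
  hence "lens_param (cis a) (cis (-a)) (cis (\<eta> + a - pi)) = (cis a - cis \<eta>) / (cis 0 - cis (\<eta> + a))"
    by (simp add: lens_param_def cis_mult)
  also have "\<dots> = of_real (sin ((\<eta> - a)/2)) / of_real (sin ((\<eta> + a)/2))"
    unfolding cis_diff using assms by (simp add: add.commute)
  finally show ?thesis by simp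
qed

lemma one_plus_exp_nonzero:
  assumes "-pi < Im \<zeta>" "Im \<zeta> < pi"
  shows "1 + exp \<zeta> \<noteq> 0"
proof
  assume "1 + exp \<zeta> = 0"
  hence "Arg (exp \<zeta>) = pi" by (simp add: add_eq_0_iff Arg_eq_pi)
  thus False using assms Arg_exp[of \<zeta>] by simp
qed

lemma cis_ne_cis_minus:
  assumes "0 < a" "a < pi"
  shows "cis a \<noteq> cis (-a)"
proof
  assume "cis a = cis (-a)"
  hence "sin a = sin (-a)" by (metis cis.sel(2))
  thus False using assms sin_gt_zero[of a] by simp
qed

lemma lens_param_exp_in_Ga:
  assumes "0 < a" "a < pi" "a/2 < Im \<zeta>" "Im \<zeta> < a"
  shows "lens_param (cis a) (cis (-a)) (exp \<zeta>) \<in> Ga a"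
proof -
  have "1 + exp \<zeta> \<noteq> 0" using assms by (intro one_plus_exp_nonzero) auto
  hence "(cis a - lens_param (cis a) (cis (-a)) (exp \<zeta>))
           / (lens_param (cis a) (cis (-a)) (exp \<zeta>) - cis (-a)) = exp \<zeta>"
    using cis_ne_cis_minus[OF assms(1,2)] by (rule lens_param_ratio)
  moreover have "Arg (exp \<zeta>) = Im \<zeta>" using assms by (intro Arg_exp) auto
  ultimately show ?thesis using assms(3,4) by (simp add: Ga_def)
qed

lemma Ga_norm_le_two:
  assumes "0 < a" "a < 1" "z \<in> Ga a"
  shows "norm z \<le> 2"
proof -
  define w where "w = (cis a - z) / (z - cis (-a))"
  have arg: "a/2 < Arg w" "Arg w < a" using assms(3) by (auto simp: Ga_def w_def)
  hence "w \<noteq> 0" using assms by (auto simp: Arg_zero)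
  hence "z \<noteq> cis (-a)" by (auto simp: w_def)
  moreover have "cis a \<noteq> cis (-a)" using assms pi_gt3 by (intro cis_ne_cis_minus) auto
  moreover have "0 \<le> cos (Arg w)" using arg assms pi_gt3 by (intro cos_ge_zero) auto
  hence "0 \<le> Re w" using \<open>w \<noteq> 0\<close> by (simp add: cos_Arg zero_le_divide_iff)
  ultimately show ?thesis
    using norm_lens_param_le_two[of "cis a" "cis (-a)" w] lens_param_inverse
    by (simp add: w_def)
qed

context
  fixes Q :: "complex \<Rightarrow> complex" and a M1 M3 S :: real
  assumes a: "0 < a" "a < 1"
    and Q_holo: "Q holomorphic_on UNIV"
    and Q_disc: "\<And>z. norm z \<le> 1 \<Longrightarrow> norm (Q z) \<le> M1"
    and Q_vertex: "\<And>z \<gamma>. \<gamma> \<in> {cis a, cis (-a)} \<Longrightarrow> norm z \<le> 3 \<Longrightarrow> norm (Q z) \<le> M3 * norm (z - \<gamma>)"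
    and Q_Ga: "\<And>z. z \<in> Ga a \<Longrightarrow> norm (Q z) \<le> S"
begin

lemma Q_lens_near_vertex:
  assumes "0 \<le> M3" "0 < \<epsilon>" "\<epsilon> \<le> 1/2" "norm (exp \<zeta>) \<le> \<epsilon> \<or> 1/\<epsilon> \<le> norm (exp \<zeta>)"
  shows "norm (Q (lens_param (cis a) (cis (-a)) (exp \<zeta>))) \<le> 4 * M3 * \<epsilon>"
proof -
  obtain \<gamma> where "\<gamma> \<in> {cis a, cis (-a)}"
    and close: "norm (lens_param (cis a) (cis (-a)) (exp \<zeta>) - \<gamma>) \<le> 4 * \<epsilon>"
    and "norm (lens_param (cis a) (cis (-a)) (exp \<zeta>)) \<le> 3"
    using lens_param_near_vertex[of "cis a" "cis (-a)" \<epsilon> "exp \<zeta>"] assms by auto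
  hence "norm (Q (lens_param (cis a) (cis (-a)) (exp \<zeta>))) \<le> M3 * (4 * \<epsilon>)"
    using Q_vertex order_trans[OF _ mult_left_mono[OF close assms(1)]] by blast
  thus ?thesis by simp
qed

lemma Q_lens_bottom:
  assumes "Im \<zeta> = a - pi"
  shows "norm (Q (lens_param (cis a) (cis (-a)) (exp \<zeta>))) \<le> M1"
proof -
  have "exp \<zeta> = - (of_real (exp (Re \<zeta>)) * cis a)"
    using assms by (simp add: exp_eq_polar cis_divide[symmetric])
  moreover have "1 + exp \<zeta> \<noteq> 0" using assms a pi_gt3 by (intro one_plus_exp_nonzero) auto
  ultimately have "norm (lens_param (cis a) (cis (-a)) (exp \<zeta>)) = 1"
    using norm_lens_param_on_circle by simp
  thus ?thesis using Q_disc by simp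
qed

lemma Q_lens_strip_boundary:
  assumes "0 \<le> \<kappa>" "0 < M3" "0 < \<epsilon>" "\<epsilon> \<le> 1/2" "exp (-T) = \<epsilon>"
    and \<epsilon>_small: "4 * M3 * \<epsilon> * exp (\<kappa> * (3*a/4)) \<le> M1 * exp (\<kappa> * (a - pi))"
    and \<zeta>: "\<zeta> \<in> cbox (Complex (-T) (a - pi)) (Complex T (3*a/4)) - box (Complex (-T) (a - pi)) (Complex T (3*a/4))"
  shows "norm (Q (lens_param (cis a) (cis (-a)) (exp \<zeta>))) * exp (\<kappa> * Im \<zeta>)
           \<le> max (M1 * exp (\<kappa> * (a - pi))) (S * exp (\<kappa> * (3*a/4)))"
proof -
  define z where "z = lens_param (cis a) (cis (-a)) (exp \<zeta>)"
  have Im: "a - pi \<le> Im \<zeta>" "Im \<zeta> \<le> 3*a/4"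
    and side: "Re \<zeta> = -T \<or> Re \<zeta> = T \<or> Im \<zeta> = a - pi \<or> Im \<zeta> = 3*a/4"
    using \<zeta> by (auto simp: in_box_complex_iff in_cbox_complex_iff)
  have exp_Im: "exp (\<kappa> * Im \<zeta>) \<le> exp (\<kappa> * (3*a/4))"
    using mult_left_mono[OF Im(2) assms(1)] by simp
  consider "Re \<zeta> = -T \<or> Re \<zeta> = T" | "Im \<zeta> = a - pi" | "Im \<zeta> = 3*a/4" using side by blast
  thus ?thesis
  proof cases
    case 1
    moreover have "exp T = 1/\<epsilon>"
      using assms(5) by (metis exp_minus inverse_eq_divide inverse_inverse_eq)
    ultimately have "norm (exp \<zeta>) \<le> \<epsilon> \<or> 1/\<epsilon> \<le> norm (exp \<zeta>)"
      using assms(5) by auto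
    hence "norm (Q z) \<le> 4 * M3 * \<epsilon>"
      unfolding z_def using assms by (intro Q_lens_near_vertex) auto
    hence "norm (Q z) * exp (\<kappa> * Im \<zeta>) \<le> 4 * M3 * \<epsilon> * exp (\<kappa> * (3*a/4))"
      using exp_Im assms(2,3) by (intro mult_mono) auto
    thus ?thesis using \<epsilon>_small by (simp add: z_def)
  next
    case 2
    hence "norm (Q z) * exp (\<kappa> * Im \<zeta>) \<le> M1 * exp (\<kappa> * (a - pi))"
      using Q_lens_bottom[of \<zeta>] by (simp add: z_def mult_right_mono)
    thus ?thesis by (simp add: z_def)
  next
    case 3
    hence "z \<in> Ga a" unfolding z_def using a pi_gt3 by (intro lens_param_exp_in_Ga) auto
    hence "norm (Q z) * exp (\<kappa> * Im \<zeta>) \<le> S * exp (\<kappa> * (3*a/4))"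
      unfolding 3 using Q_Ga by (simp add: mult_right_mono)
    thus ?thesis by (simp add: z_def)
  qed
qed

lemma strip_two_constants:
  assumes "0 \<le> \<kappa>" "0 < M1" "0 < M3" "a - pi < y" "y < 3*a/4"
  shows "norm (Q (lens_param (cis a) (cis (-a)) (cis y))) * exp (\<kappa> * y)
           \<le> max (M1 * exp (\<kappa> * (a - pi))) (S * exp (\<kappa> * (3*a/4)))" (is "_ \<le> ?B")
proof -
  define H where "H \<zeta> = Q (lens_param (cis a) (cis (-a)) (exp \<zeta>)) * exp (- \<i> * of_real \<kappa> * \<zeta>)" for \<zeta>
  have norm_H: "norm (H \<zeta>) = norm (Q (lens_param (cis a) (cis (-a)) (exp \<zeta>))) * exp (\<kappa> * Im \<zeta>)" for \<zeta>
    by (simp add: H_def norm_mult)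
  \<comment> \<open>Near the vertices Q is O(\<epsilon>); this choice makes the vertical sides no worse than the bottom.\<close>
  define \<epsilon> where "\<epsilon> = min (1/2) (M1 * exp (\<kappa> * (a/4 - pi)) / (4 * M3))"
  have \<epsilon>: "0 < \<epsilon>" "\<epsilon> \<le> 1/2" using assms by (simp_all add: \<epsilon>_def)
  have "4 * M3 * \<epsilon> * exp (\<kappa> * (3*a/4)) \<le> M1 * exp (\<kappa> * (a/4 - pi)) * exp (\<kappa> * (3*a/4))"
    using assms by (intro mult_right_mono) (auto simp: \<epsilon>_def field_simps min_def)
  also have "\<dots> = M1 * exp (\<kappa> * (a - pi))" by (simp add: mult.assoc algebra_simps flip: exp_add)
  finally have \<epsilon>_small: "4 * M3 * \<epsilon> * exp (\<kappa> * (3*a/4)) \<le> M1 * exp (\<kappa> * (a - pi))" .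
  define T where "T = - ln \<epsilon>"
  have T: "0 < T" "exp (-T) = \<epsilon>" using \<epsilon> by (simp_all add: T_def)
  define R where "R = box (Complex (-T) (a - pi)) (Complex T (3*a/4))"
  define U where "U = {\<zeta>. -pi < Im \<zeta> \<and> Im \<zeta> < pi}"
  have "Complex 0 y \<in> R" using a assms T by (simp add: R_def in_box_complex_iff)
  hence closure_R: "closure R = cbox (Complex (-T) (a - pi)) (Complex T (3*a/4))"
    unfolding R_def by (intro closure_box) auto
  hence "closure R \<subseteq> U" "R \<subseteq> U"
    using a pi_gt3 closure_subset[of R] by (auto simp: U_def in_cbox_complex_iff)
  have H_holo: "H holomorphic_on U"
    using one_plus_exp_nonzero unfolding H_def lens_param_def U_def
    by (intro holomorphic_intros holomorphic_on_compose_gen[OF _ Q_holo, unfolded o_def]) auto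
  have interior_R: "interior R = R" unfolding R_def by (rule interior_open[OF open_box])
  have "norm (H (Complex 0 y)) \<le> ?B"
  proof (rule maximum_modulus_frontier[where f = H and S = R])
    show "H holomorphic_on interior R"
      unfolding interior_R using H_holo \<open>R \<subseteq> U\<close> by (rule holomorphic_on_subset)
    show "continuous_on (closure R) H"
      using holomorphic_on_imp_continuous_on[OF H_holo] \<open>closure R \<subseteq> U\<close> by (rule continuous_on_subset)
    show "norm (H \<zeta>) \<le> ?B" if "\<zeta> \<in> frontier R" for \<zeta>
      unfolding norm_H using that closure_R interior_R assms \<epsilon> T \<epsilon>_small
      by (intro Q_lens_strip_boundary) (auto simp: frontier_def R_def)
  qed (use \<open>Complex 0 y \<in> R\<close> in \<open>auto simp: R_def\<close>)
  thus ?thesis by (simp add: norm_H exp_eq_polar)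
qed

end

lemma two_constants_lower_bound:
  fixes q M S \<kappa> \<eta> a :: real
  assumes "0 \<le> \<kappa>" "0 \<le> \<eta>" "0 \<le> a" "0 \<le> M" "M < q * exp (\<kappa> * \<eta>)"
    and "q * exp (\<kappa> * (\<eta> + a - pi)) \<le> max (M * exp (\<kappa> * (a - pi))) (S * exp (\<kappa> * (3*a/4)))"
  shows "q * exp (- 4 * \<kappa>) \<le> S"
proof -
  have "0 < q * exp (\<kappa> * \<eta>)" using assms(4,5) by linarith
  hence "0 < q" by (simp add: zero_less_mult_iff)
  have "M * exp (\<kappa> * (a - pi)) < q * exp (\<kappa> * \<eta>) * exp (\<kappa> * (a - pi))"
    using assms(5) by (intro mult_strict_right_mono) auto
  also have "\<dots> = q * exp (\<kappa> * (\<eta> + a - pi))"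
    by (simp add: algebra_simps flip: exp_add)
  finally have "q * exp (\<kappa> * (\<eta> + a - pi)) \<le> S * exp (\<kappa> * (3*a/4))" using assms(6) by linarith
  moreover have "\<kappa> * (\<eta> + a/4 - pi) = \<kappa> * (\<eta> + a - pi) - \<kappa> * (3*a/4)"
    by (simp add: algebra_simps)
  ultimately have "q * exp (\<kappa> * (\<eta> + a/4 - pi)) \<le> S"
    by (simp add: exp_diff pos_divide_le_eq)
  moreover have "\<kappa> * (- 4) \<le> \<kappa> * (\<eta> + a/4 - pi)"
    using assms(1-3) pi_less_4 by (intro mult_left_mono) auto
  hence "q * exp (- 4 * \<kappa>) \<le> q * exp (\<kappa> * (\<eta> + a/4 - pi))"
    using \<open>0 < q\<close> by (simp add: mult.commute)
  ultimately show ?thesis by linarith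
qed

definition P_poly :: "complex \<Rightarrow> nat \<Rightarrow> (nat \<Rightarrow> complex) \<Rightarrow> nat set \<Rightarrow> complex \<Rightarrow> complex" where
  "P_poly \<sigma> d c J z = 1 - \<sigma> * z ^ d + (\<Sum>j\<in>J. c j * z ^ j)"

lemma norm_P_poly_le:
  assumes "\<sigma> \<in> {0, 1}" "d \<le> n" "J \<subseteq> {..n}" "\<forall>j\<in>J. norm (c j) \<le> 1" "1 \<le> R" "norm z \<le> R"
  shows "norm (P_poly \<sigma> d c J z) \<le> (real n + 3) * R ^ n"
proof -
  have power_le: "norm (z ^ k) \<le> R ^ n" if "k \<le> n" for k
    using order_trans[OF power_mono[OF assms(6) norm_ge_zero] power_increasing[OF that assms(5)]]
    by (simp add: norm_power)
  have "norm (\<Sum>j\<in>J. c j * z ^ j) \<le> (\<Sum>j\<in>J. R ^ n)"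
    using assms(3,4) power_le mult_mono[of "norm (c _)" 1 "norm (z ^ _)" "R ^ n"]
    by (intro sum_norm_le) (force simp: norm_mult)
  also have "\<dots> = real (card J) * R ^ n" by simp
  also have "\<dots> \<le> (real n + 1) * R ^ n"
    using card_mono[OF _ assms(3)] assms(5) by (intro mult_right_mono) auto
  finally have "norm (\<Sum>j\<in>J. c j * z ^ j) \<le> (real n + 1) * R ^ n" .
  moreover have "norm (\<sigma> * z ^ d) \<le> R ^ n" "1 \<le> R ^ n"
    using assms(1,5) power_le[OF assms(2)] by (auto simp: norm_mult)
  moreover have "norm (P_poly \<sigma> d c J z) \<le> 1 + norm (\<sigma> * z ^ d) + norm (\<Sum>j\<in>J. c j * z ^ j)"
    unfolding P_poly_def
    using norm_triangle_ineq[of "1 - \<sigma> * z ^ d"] norm_triangle_ineq4[of 1 "\<sigma> * z ^ d"] norm_one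
    by (smt (verit))
  ultimately show ?thesis by (simp add: algebra_simps)
qed

lemma norm_P_poly_real_ge:
  assumes "\<sigma> \<in> {0, 1}" "1 \<le> d" "J \<subseteq> {..n}" "\<forall>j\<in>J. norm (c j) \<le> 1" "\<forall>j\<in>J. m \<le> real j"
    and "0 < \<rho>" "\<rho> \<le> 1"
  shows "(1 - \<rho>) - (real n + 1) * \<rho> powr m \<le> norm (P_poly \<sigma> d c J (of_real \<rho>))"
proof -
  have "\<rho> ^ d \<le> \<rho>" using assms(2,6,7) power_decreasing[of 1 d \<rho>] by simp
  moreover have "norm (1 - of_real \<rho> ^ d :: complex) = 1 - \<rho> ^ d"
    using assms(6,7) power_le_one[of \<rho> d]
    by (metis abs_of_nonneg diff_ge_0_iff_ge less_imp_le norm_of_real of_real_1 of_real_diff of_real_power)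
  ultimately have head: "1 - \<rho> \<le> norm (1 - \<sigma> * of_real \<rho> ^ d)"
    using assms(1,6,7) by auto
  have "norm (\<Sum>j\<in>J. c j * of_real \<rho> ^ j) \<le> (\<Sum>j\<in>J. \<rho> powr m)"
  proof (intro sum_norm_le)
    fix j assume "j \<in> J"
    hence "\<rho> ^ j \<le> \<rho> powr m" "norm (c j) \<le> 1"
      using assms by (auto simp: powr_realpow[symmetric] intro: powr_mono')
    thus "norm (c j * of_real \<rho> ^ j) \<le> \<rho> powr m"
      using assms(6) mult_mono[of "norm (c j)" 1 "\<rho> ^ j" "\<rho> powr m"] by (simp add: norm_mult norm_power)
  qed
  also have "\<dots> = real (card J) * \<rho> powr m" by simp
  also have "\<dots> \<le> (real n + 1) * \<rho> powr m"
    using card_mono[OF _ assms(3)] by (intro mult_right_mono) auto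
  finally show ?thesis
    using head norm_diff_ineq[of "1 - \<sigma> * of_real \<rho> ^ d" "\<Sum>j\<in>J. c j * of_real \<rho> ^ j"]
    by (simp add: P_poly_def)
qed

definition P_exponents :: "nat \<Rightarrow> nat set" where
  "P_exponents n = {j. real n powr (1/5) \<le> real j \<and> j \<le> n}"

lemma in_Q_elim:
  assumes "in_Q n Q"
  obtains \<sigma> d c where "\<sigma> \<in> {0, 1}" "1 \<le> d" "d \<le> n" "\<forall>j\<in>P_exponents n. norm (c j) \<le> 1"
    and "Q = (\<lambda>z. (z - cis (real n powr (-2/5))) * (z - cis (- (real n powr (-2/5))))
                  * P_poly \<sigma> d c (P_exponents n) z)"
proof -
  obtain p \<sigma> d c where "\<sigma> \<in> {0, 1}" "1 \<le> d" "real d < real n powr (1/5)"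
    "\<forall>j\<in>P_exponents n. norm (c j) \<le> 1"
    "p = P_poly \<sigma> d c (P_exponents n)"
    "Q = (\<lambda>z. (z - cis (real n powr (-2/5))) * (z - cis (- (real n powr (-2/5)))) * p z)"
    using assms unfolding in_Q_def in_P_def P_exponents_def P_poly_def by auto
  moreover have "d \<le> n"
  proof -
    have "n \<noteq> 0" using \<open>real d < real n powr (1/5)\<close> by (cases "n = 0") auto
    hence "real n powr (1/5) \<le> real n powr 1" by (intro powr_mono) auto
    thus ?thesis using \<open>real d < real n powr (1/5)\<close> \<open>n \<noteq> 0\<close> by simp
  qed
  ultimately show ?thesis using that by blast
qed

lemma in_Q_holomorphic:
  assumes "in_Q n Q"
  shows "Q holomorphic_on UNIV"
  using assms by (rule in_Q_elim) (auto simp: P_poly_def intro!: holomorphic_intros)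

lemma norm_in_Q_le:
  assumes "in_Q n Q" "1 \<le> R" "norm z \<le> R" "\<gamma> \<in> {cis (real n powr (-2/5)), cis (- (real n powr (-2/5)))}"
  shows "norm (Q z) \<le> (R + 1) * ((real n + 3) * R ^ n) * norm (z - \<gamma>)"
proof -
  obtain \<sigma> d c where P: "\<sigma> \<in> {0, 1}" "1 \<le> d" "d \<le> n" "\<forall>j\<in>P_exponents n. norm (c j) \<le> 1"
    and Q: "Q = (\<lambda>z. (z - cis (real n powr (-2/5))) * (z - cis (- (real n powr (-2/5))))
                  * P_poly \<sigma> d c (P_exponents n) z)"
    by (rule in_Q_elim[OF assms(1)])
  obtain \<delta> where \<delta>: "norm (Q z) = norm (z - \<gamma>) * (norm (z - cis \<delta>) * norm (P_poly \<sigma> d c (P_exponents n) z))"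
  proof -
    from assms(4) consider "\<gamma> = cis (real n powr (-2/5))" | "\<gamma> = cis (- (real n powr (-2/5)))" by blast
    thus thesis
    proof cases
      case 1
      thus thesis using that[of "- (real n powr (-2/5))"] by (simp add: Q norm_mult mult_ac)
    next
      case 2
      thus thesis using that[of "real n powr (-2/5)"] by (simp add: Q norm_mult mult_ac)
    qed
  qed
  have "norm (z - cis \<delta>) \<le> R + 1"
    using norm_triangle_ineq4[of z "cis \<delta>"] assms(3) by simp
  moreover have "norm (P_poly \<sigma> d c (P_exponents n) z) \<le> (real n + 3) * R ^ n"
    using P(1,3,4) assms(2,3) by (intro norm_P_poly_le) (auto simp: P_exponents_def)
  ultimately have "norm (z - cis \<delta>) * norm (P_poly \<sigma> d c (P_exponents n) z) \<le> (R + 1) * ((real n + 3) * R ^ n)"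
    using assms(2) by (intro mult_mono) auto
  thus ?thesis unfolding \<delta> by (simp add: mult_left_mono mult.commute)
qed

lemma powr_le_exp_of_one_minus_ge:
  fixes \<rho> m t :: real
  assumes "0 \<le> \<rho>" "0 < m" "t / m \<le> 1 - \<rho>"
  shows "\<rho> powr m \<le> exp (- t)"
proof -
  have "\<rho> powr m \<le> exp (- (t / m)) powr m"
    using assms exp_minus_ge[of "t / m"] by (intro powr_mono2) auto
  thus ?thesis using assms(2) by (simp add: exp_powr_real)
qed

lemma norm_in_Q_real_ge:
  assumes "in_Q n Q" "3 \<le> n" "0 < \<rho>" "4 * ln (real n) / real n powr (1/5) \<le> 1 - \<rho>"
  shows "1 / (4 * real n ^ 3) \<le> norm (Q (of_real \<rho>))"
proof -
  define m where "m = real n powr (1/5)"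
  define a where "a = real n powr (-2/5)"
  have n: "3 \<le> real n" "0 < m" "m \<le> real n" "1 / real n \<le> a"
    using assms(2) powr_mono[of "1/5" 1 "real n"] powr_mono[of "-1" "-2/5" "real n"]
    by (auto simp: m_def a_def powr_minus_divide)
  have "exp 1 \<le> real n" using exp_le n(1) by linarith
  hence L: "1 \<le> ln (real n)" using n(1) by (simp add: ln_ge_iff)
  obtain \<sigma> d c where P: "\<sigma> \<in> {0, 1}" "1 \<le> d" "d \<le> n" "\<forall>j\<in>P_exponents n. norm (c j) \<le> 1"
    and Q: "Q = (\<lambda>z. (z - cis a) * (z - cis (- a)) * P_poly \<sigma> d c (P_exponents n) z)"
    unfolding a_def by (rule in_Q_elim[OF assms(1)])
  have "4 / real n \<le> 4 * ln (real n) / m"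
    using n L by (intro frac_le) auto
  hence \<rho>: "4 / real n \<le> 1 - \<rho>" "\<rho> \<le> 1"
    using assms(4) divide_nonneg_nonneg[of 4 "real n"] unfolding m_def by linarith+
  have "(real n + 1) * \<rho> powr m \<le> (real n + 1) * exp (- (4 * ln (real n)))"
    using assms(3,4) n(2) by (intro mult_left_mono powr_le_exp_of_one_minus_ge) (auto simp: m_def)
  also have "\<dots> = (real n + 1) / real n ^ 4"
    using n(1) by (simp add: exp_minus exp_of_nat_mult[of 4, simplified] divide_inverse)
  also have "\<dots> \<le> 2 / real n"
  proof -
    have "real n \<le> real n ^ 3" using n(1) by (intro power_increasing[of 1 3, simplified]) auto
    hence "real n + 1 \<le> 2 * real n ^ 3" using n(1) by linarith
    hence "(real n + 1) / real n ^ 4 \<le> 2 * real n ^ 3 / real n ^ 4"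
      using n(1) by (intro divide_right_mono) auto
    also have "\<dots> = 2 / real n" using n(1) by (simp add: power_eq_if)
    finally show ?thesis .
  qed
  finally have tail: "(real n + 1) * \<rho> powr m \<le> 2 / real n" .
  have "(1 - \<rho>) - (real n + 1) * \<rho> powr m \<le> norm (P_poly \<sigma> d c (P_exponents n) (of_real \<rho>))"
    using P assms(3) \<rho>(2) by (intro norm_P_poly_real_ge) (auto simp: P_exponents_def m_def)
  moreover have "4 / real n = 2 / real n + 2 / real n" "1 / real n \<le> 2 / real n"
    using n(1) by (auto intro: divide_right_mono)
  ultimately have "1 / real n \<le> norm (P_poly \<sigma> d c (P_exponents n) (of_real \<rho>))"
    using \<rho>(1) tail by linarith
  moreover have factor: "1 / (2 * real n) \<le> norm (of_real \<rho> - cis b)" if "b = a \<or> b = - a" for b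
  proof -
    have "0 < a" "a < 1" using n(1) by (auto simp: a_def intro: powr_less_one)
    have "a / 2 \<le> sin a" using \<open>0 < a\<close> \<open>a < 1\<close> by (intro sin_ge_half_self) auto
    thus ?thesis using that n abs_Im_le_cmod[of "of_real \<rho> - cis b"] by auto
  qed
  ultimately have "1 / (2 * real n) * (1 / (2 * real n)) * (1 / real n) \<le> norm (Q (of_real \<rho>))"
    unfolding Q norm_mult using factor[of a] factor[of "- a"] by (intro mult_mono) auto
  thus ?thesis by (simp add: power3_eq_cube)
qed

lemma sin_ratio_bounds:
  fixes a \<eta> :: real
  assumes "0 < a" "a < \<eta>" "\<eta> + a \<le> 2"
  shows "0 < sin ((\<eta> - a)/2) / sin ((\<eta> + a)/2)"
    and "a / (2 * (\<eta> + a)) \<le> 1 - sin ((\<eta> - a)/2) / sin ((\<eta> + a)/2)"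
proof -
  define u v where "u = (\<eta> + a)/2" and "v = (\<eta> - a)/2"
  have uv: "0 < v" "v < u" "u \<le> 1" "(u - v)/2 = a/2" "(u + v)/2 = \<eta>/2"
    using assms by (auto simp: u_def v_def field_simps)
  hence sin_uv: "0 < sin v" "0 < sin u" "sin u \<le> u"
    using pi_gt3 by (auto intro!: sin_gt_zero sin_x_le_x)
  thus "0 < sin ((\<eta> - a)/2) / sin ((\<eta> + a)/2)" by (simp add: u_def v_def)
  have "a/4 \<le> sin (a/2)" "1/2 \<le> cos (\<eta>/2)"
    using sin_ge_half_self[of "a/2"] cos_ge_one_half[of "\<eta>/2"] assms by auto
  hence "2 * (a/4) * (1/2) \<le> 2 * sin (a/2) * cos (\<eta>/2)"
    using assms by (intro mult_mono) auto
  hence "a/4 \<le> sin u - sin v" by (simp add: sin_diff_sin uv)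
  hence "(a/4) / u \<le> (sin u - sin v) / sin u"
    using sin_uv assms by (intro frac_le) auto
  thus "a / (2 * (\<eta> + a)) \<le> 1 - sin ((\<eta> - a)/2) / sin ((\<eta> + a)/2)"
    using sin_uv by (simp add: u_def v_def diff_divide_distrib)
qed

lemma eta_choice_bounds:
  fixes L m :: real
  assumes "1 \<le> L" "128 * L \<le> m"
  defines "a \<equiv> 1 / m^2" and "\<eta> \<equiv> 1 / (64 * m * L)"
  shows "0 < a" "a < \<eta>" "\<eta> < 1" "4 * L / m \<le> a / (2 * (\<eta> + a))"
proof -
  have m: "128 \<le> m" "0 < m" using assms by linarith+
  show "0 < a" using m by (simp add: a_def)
  have "64 * m * L < m^2" using assms m by (simp add: power2_eq_square)
  thus "a < \<eta>" using assms m by (simp add: a_def \<eta>_def frac_less2)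
  have "128 \<le> m * L" using m assms mult_mono[of 128 m 1 L] by simp
  thus "\<eta> < 1" by (simp add: \<eta>_def divide_less_eq mult.assoc)
  have "8 * L * (\<eta> + a) \<le> a * m"
  proof -
    have "8 * L * (\<eta> + a) = 1 / (8 * m) + 8 * L / m / m"
      using assms m by (simp add: a_def \<eta>_def power2_eq_square field_simps)
    also have "\<dots> \<le> 1 / (8 * m) + (1/16) / m"
      using assms m by (intro add_left_mono divide_right_mono) (auto simp: divide_le_eq)
    also have "\<dots> \<le> a * m" using m by (simp add: a_def power2_eq_square divide_simps)
    finally show ?thesis .
  qed
  have "4 * L / m * (2 * (\<eta> + a)) = 8 * L * (\<eta> + a) / m"
    by (simp add: algebra_simps add_divide_distrib)
  also have "\<dots> \<le> a * m / m"
    using \<open>8 * L * (\<eta> + a) \<le> a * m\<close> m by (intro divide_right_mono) auto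
  also have "\<dots> = a" using m by simp
  finally have "4 * L / m * (2 * (\<eta> + a)) \<le> a" .
  thus "4 * L / m \<le> a / (2 * (\<eta> + a))"
    using m \<open>0 < a\<close> \<open>a < \<eta>\<close> by (simp add: le_divide_eq)
qed

lemma in_Q_two_constants:
  fixes n :: nat
  defines "a \<equiv> real n powr (-2/5)"
  assumes "in_Q n Q" "2 \<le> n" "0 \<le> \<kappa>" "a - pi < y" "y < 3*a/4"
  shows "norm (Q (lens_param (cis a) (cis (-a)) (cis y))) * exp (\<kappa> * y)
           \<le> max (4 * (real n + 3) * exp (\<kappa> * (a - pi))) ((SUP w\<in>Ga a. norm (Q w)) * exp (\<kappa> * (3*a/4)))"
proof -
  note Q_le = norm_in_Q_le[OF assms(2), folded a_def]
  have a: "0 < a" "a < 1" using assms(3) by (auto simp: a_def intro: powr_less_one)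
  have vertex: "norm (Q z) \<le> 4 * ((real n + 3) * 3 ^ n) * norm (z - \<gamma>)"
    if "\<gamma> \<in> {cis a, cis (-a)}" "norm z \<le> 3" for z \<gamma>
    using Q_le[of 3 z \<gamma>] that by simp
  have near: "norm (Q z) \<le> (R + 1) * ((real n + 3) * R ^ n) * (R + 1)" if "1 \<le> R" "norm z \<le> R" for z R
  proof -
    have "norm (z - cis a) \<le> R + 1" using norm_triangle_ineq4[of z "cis a"] that by simp
    moreover have "0 \<le> (R + 1) * ((real n + 3) * R ^ n)" using that by simp
    ultimately show ?thesis using Q_le[OF that, of "cis a"] by (meson insertI1 mult_left_mono order_trans)
  qed
  have disc: "norm (Q z) \<le> 4 * (real n + 3)" if "norm z \<le> 1" for z
    using near[of 1 z] that by simp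
  have Ga: "norm (Q z) \<le> 9 * ((real n + 3) * 2 ^ n)" if "z \<in> Ga a" for z
    using near[of 2 z] Ga_norm_le_two[OF a that] by simp
  have SUP: "norm (Q z) \<le> (SUP w\<in>Ga a. norm (Q w))" if "z \<in> Ga a" for z
    using Ga that by (intro cSUP_upper bdd_aboveI2) auto
  show ?thesis
    by (rule strip_two_constants[OF a in_Q_holomorphic[OF assms(2)] disc vertex SUP assms(4) _ _ assms(5,6)])
      simp_all
qed

lemma lower_bound_times_power_ten_gt:
  assumes n: "3 \<le> real n" and q: "1 / (4 * real n ^ 3) \<le> q"
  shows "4 * (real n + 3) < q * real n ^ 10"
proof -
  have "real n * 3 ^ 6 / 4 \<le> real n * real n ^ 6 / 4"
    using n by (intro divide_right_mono mult_left_mono power_mono) auto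
  also have "\<dots> = 1 / (4 * real n ^ 3) * (real n ^ 3 * (real n * real n ^ 6))"
    using n by simp
  also have "real n ^ 3 * (real n * real n ^ 6) = real n ^ 10" by algebra
  also have "1 / (4 * real n ^ 3) * real n ^ 10 \<le> q * real n ^ 10"
    using q by (intro mult_right_mono) auto
  finally show ?thesis using n by simp
qed

lemma exp_exponent_choice_le:
  fixes m L :: real
  assumes n: "3 \<le> real n" and m: "1 \<le> m" and L: "L = ln (real n)" "1 \<le> L"
  shows "exp (- 3000 * m * L ^ 5) \<le> 1 / (4 * real n ^ 3) * exp (- 4 * (640 * m * L^2))"
proof -
  have "4 * real n ^ 3 \<le> real n ^ 3 * real n ^ 3"
    using n power_mono[of 3 "real n" 3] by (intro mult_right_mono) auto
  also have "\<dots> = exp (6 * L)"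
    using n L by (simp add: exp_of_nat_mult[of 6, simplified] power_add[symmetric])
  finally have "exp (- (6 * L)) \<le> 1 / (4 * real n ^ 3)"
    using n by (simp add: exp_minus inverse_eq_divide frac_le)
  moreover have "6 * L + 2560 * (m * L^2) \<le> 3000 * (m * L^5)"
  proof -
    have "L \<le> L^5" "L^2 \<le> L^5" using power_increasing[of 1 5 L] power_increasing[of 2 5 L] L(2) by simp_all
    hence "L \<le> m * L^5" "m * L^2 \<le> m * L^5"
      using m L mult_mono[of 1 m L "L^5"] by auto
    moreover have "0 \<le> m * L^5" using m L by simp
    ultimately show ?thesis by linarith
  qed
  hence "exp (- 3000 * m * L ^ 5) \<le> exp (- (6 * L)) * exp (- 4 * (640 * m * L^2))"
    by (simp add: mult.assoc flip: exp_add)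
  ultimately show ?thesis by (smt (verit) exp_gt_zero mult_right_mono)
qed

lemma SUP_Ga_in_Q_ge:
  fixes n :: nat
  assumes "3 \<le> n" "128 * ln (real n) \<le> real n powr (1/5)" "in_Q n Q"
  shows "exp (- 3000 * real n powr (1/5) * ln (real n) ^ 5) \<le> (SUP w\<in>Ga (real n powr (-2/5)). norm (Q w))"
proof -
  define m L a where "m = real n powr (1/5)" and "L = ln (real n)" and "a = real n powr (-2/5)"
  define \<eta> \<kappa> where "\<eta> = 1 / (64 * m * L)" and "\<kappa> = 640 * m * L^2"
  define \<rho> where "\<rho> = sin ((\<eta> - a)/2) / sin ((\<eta> + a)/2)"
  define S where "S = (SUP w\<in>Ga a. norm (Q w))"
  have n: "3 \<le> real n" "1 \<le> m" using assms(1) by (auto simp: m_def ge_one_powr_ge_zero)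
  have L: "1 \<le> L" using exp_le n(1) by (simp add: L_def ln_ge_iff)
  have "a = 1 / m^2"
    using n by (simp add: a_def m_def powr_minus_divide power2_eq_square flip: powr_add)
  note \<eta> = eta_choice_bounds[OF L assms(2)[folded m_def L_def], folded this \<eta>_def]
  have \<rho>: "0 < \<rho>" "4 * L / m \<le> 1 - \<rho>"
    using sin_ratio_bounds[of a \<eta>] \<eta> by (auto simp: \<rho>_def)
  have q: "1 / (4 * real n ^ 3) \<le> norm (Q (of_real \<rho>))"
    using norm_in_Q_real_ge[OF assms(3,1) \<rho>(1)] \<rho>(2) by (simp add: L_def m_def)
  have "sin ((\<eta> + a)/2) \<noteq> 0" using \<eta> pi_gt3 by (intro sin_gt_zero[THEN less_imp_neq, symmetric]) auto
  hence "lens_param (cis a) (cis (-a)) (cis (\<eta> + a - pi)) = of_real \<rho>"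
    unfolding \<rho>_def by (rule lens_param_real_point)
  hence two: "norm (Q (of_real \<rho>)) * exp (\<kappa> * (\<eta> + a - pi))
           \<le> max (4 * (real n + 3) * exp (\<kappa> * (a - pi))) (S * exp (\<kappa> * (3*a/4)))"
    using in_Q_two_constants[OF assms(3), of \<kappa> "\<eta> + a - pi", folded a_def S_def] \<eta> n L pi_gt3
    by (simp add: \<kappa>_def)
  have "\<kappa> * \<eta> = 10 * L" using n L by (simp add: \<kappa>_def \<eta>_def power2_eq_square)
  hence "exp (\<kappa> * \<eta>) = real n ^ 10"
    using n by (simp add: L_def exp_of_nat_mult[of 10, simplified])
  hence big: "4 * (real n + 3) < norm (Q (of_real \<rho>)) * exp (\<kappa> * \<eta>)"
    using lower_bound_times_power_ten_gt[OF n(1) q] by simp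
  have "0 \<le> \<kappa>" "0 \<le> \<eta>" "0 \<le> a" "0 \<le> 4 * (real n + 3)" using \<eta> n L by (auto simp: \<kappa>_def)
  note S_ge = two_constants_lower_bound[OF this big two]
  have "exp (- 3000 * m * L ^ 5) \<le> 1 / (4 * real n ^ 3) * exp (- 4 * \<kappa>)"
    using exp_exponent_choice_le[OF n L_def L] by (simp add: \<kappa>_def)
  also have "\<dots> \<le> norm (Q (of_real \<rho>)) * exp (- 4 * \<kappa>)"
    using q by (intro mult_right_mono) auto
  finally have "exp (- 3000 * m * L ^ 5) \<le> S" using S_ge by linarith
  thus ?thesis by (simp only: S_def a_def m_def L_def)
qed

theorem proposition11:
  shows "\<exists>C::real. C > 0 \<and>
    (\<forall>\<^sub>F n in sequentially. \<forall>Q. in_Q n Q \<longrightarrow>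
       (SUP w\<in>Ga (real n powr (-2/5)). norm (Q w))
         \<ge> exp (- C * real n powr (1/5) * (ln (real n)) ^ 5))"
proof -
  have "\<forall>\<^sub>F n in sequentially. 3 \<le> n \<and> 128 * ln (real n) \<le> real n powr (1/5)"
    by (intro eventually_conj eventually_ge_at_top) real_asymp
  hence "\<forall>\<^sub>F n in sequentially. \<forall>Q. in_Q n Q \<longrightarrow>
           (SUP w\<in>Ga (real n powr (-2/5)). norm (Q w)) \<ge> exp (- 3000 * real n powr (1/5) * (ln (real n)) ^ 5)"
    by eventually_elim (use SUP_Ga_in_Q_ge in blast)
  thus ?thesis by (intro exI[of _ 3000]) simp
qed

end
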